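(* Let $n\geq 2$, let $F_n$ be the free metabelian Lie algebra generated by $x_1,\ldots,x_n$ over a field $K$ of characteristic zero, and let $F_n'$ be its commutator ideal. For $u\in F_n'$ let $\psi_u=\exp(\mathrm{ad}\,u)=1+\mathrm{ad}\,u$, i.e. $\psi_u(v)=v+[v,u]$ for $v\in F_n$. Then $\psi_u$ maps the algebra $F_n^{S_n}$ of symmetric polynomials into itself (i.e. $\psi_u\in \mathrm{Inn}(F_n^{S_n})$) if and only if $u\in (F_n')^{S_n}$, that is, $u$ is itself symmetric.
   Context: The free metabelian Lie algebra is $F_n=L_n/L_n''$, where $L_n$ is the free Lie algebra on $x_1,\ldots,x_n$. The symmetric group $S_n$ acts on $F_n$ by permuting the generators: $\pi\, p(x_1,\ldots,x_n)=p(x_{\pi(1)},\ldots,x_{\pi(n)})$. An element $p$ is symmetric if $\pi p=p$ for all $\pi\in S_n$; $F_n^{S_n}$ is the algebra of symmetric elements of $F_n$ and $(F_n')^{S_n}=F_n'\cap F_n^{S_n}$. For $u\in F_n'$, $\psi_u$ is an automorphism of $F_n$ (an inner automorphism), and $\mathrm{Inn}(F_n^{S_n})$ denotes the group of inner automorphisms $\psi_u$ of $F_n$ which map $F_n^{S_n}$ into itself. *)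

theory Defs
  imports "HOL-Library.Poly_Mapping" "HOL-Combinatorics.Permutations"
begin

(* Free associative algebra K<x_0,...> : noncommutative polynomials, i.e.
   finitely supported maps from words (lists of letter indices) to K. *)
type_synonym 'k ncpoly = "nat list \<Rightarrow>\<^sub>0 'k"

definition ncmul :: "'k::comm_ring_1 ncpoly \<Rightarrow> 'k ncpoly \<Rightarrow> 'k ncpoly" where
  "ncmul p q = (\<Sum>u\<in>Poly_Mapping.keys p. \<Sum>w\<in>Poly_Mapping.keys q.
       Poly_Mapping.single (u @ w) (Poly_Mapping.lookup p u * Poly_Mapping.lookup q w))"

definition ncscale :: "'k::comm_ring_1 \<Rightarrow> 'k ncpoly \<Rightarrow> 'k ncpoly" where
  "ncscale a p = ncmul (Poly_Mapping.single [] a) p"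

definition lie_br :: "'k::comm_ring_1 ncpoly \<Rightarrow> 'k ncpoly \<Rightarrow> 'k ncpoly" where
  "lie_br p q = ncmul p q - ncmul q p"

(* the generator x_i (indices 0..n-1 stand for x_1..x_n) *)
definition gen :: "nat \<Rightarrow> 'k::comm_ring_1 ncpoly" where
  "gen i = Poly_Mapping.single [i] 1"

(* Free Lie algebra L_n: the Lie subalgebra of K<x_0..x_{n-1}> generated by
   x_0,...,x_{n-1} (a standard realisation of the free Lie algebra) *)
inductive_set free_lie :: "nat \<Rightarrow> 'k::comm_ring_1 ncpoly set" for n where
  gen_in: "i < n \<Longrightarrow> gen i \<in> free_lie n"
| zero_in: "0 \<in> free_lie n"
| add_in: "p \<in> free_lie n \<Longrightarrow> q \<in> free_lie n \<Longrightarrow> p + q \<in> free_lie n"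
| scale_in: "p \<in> free_lie n \<Longrightarrow> ncscale a p \<in> free_lie n"
| br_in: "p \<in> free_lie n \<Longrightarrow> q \<in> free_lie n \<Longrightarrow> lie_br p q \<in> free_lie n"

inductive_set comm_span :: "'k::comm_ring_1 ncpoly set \<Rightarrow> 'k ncpoly set \<Rightarrow> 'k ncpoly set"
  for A B where
  br_in: "a \<in> A \<Longrightarrow> b \<in> B \<Longrightarrow> lie_br a b \<in> comm_span A B"
| zero_in: "0 \<in> comm_span A B"
| add_in: "p \<in> comm_span A B \<Longrightarrow> q \<in> comm_span A B \<Longrightarrow> p + q \<in> comm_span A B"
| scale_in: "p \<in> comm_span A B \<Longrightarrow> ncscale a p \<in> comm_span A B"

definition L1 :: "nat \<Rightarrow> 'k::comm_ring_1 ncpoly set" where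
  "L1 n = comm_span (free_lie n) (free_lie n)"

definition L2 :: "nat \<Rightarrow> 'k::comm_ring_1 ncpoly set" where
  "L2 n = comm_span (L1 n) (L1 n)"

definition perm_act :: "(nat \<Rightarrow> nat) \<Rightarrow> 'k::comm_ring_1 ncpoly \<Rightarrow> 'k ncpoly" where
  "perm_act \<pi> p = (\<Sum>w\<in>Poly_Mapping.keys p. Poly_Mapping.single (map \<pi> w) (Poly_Mapping.lookup p w))"

(* the class of p \<in> L_n in F_n = L_n / L_n'' is symmetric *)
definition sym_F :: "nat \<Rightarrow> 'k::comm_ring_1 ncpoly \<Rightarrow> bool" where
  "sym_F n p \<longleftrightarrow> (\<forall>\<pi>. \<pi> permutes {..<n} \<longrightarrow> perm_act \<pi> p - p \<in> L2 n)"

definition psi :: "'k::comm_ring_1 ncpoly \<Rightarrow> 'k ncpoly \<Rightarrow> 'k ncpoly" where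
  "psi u v = v + lie_br v u"

end

theory Submission
  imports Defs "HOL.Modules"
begin

text \<open>Sufficiency is immediate because \<open>L''\<close> is an ideal of \<open>L\<close>. For necessity, apply the
  hypothesis to the symmetric element \<open>s = x\<^sub>1 + \<dots> + x\<^sub>n\<close>: symmetry of \<open>\<psi>\<^sub>u s = s + [s, u]\<close>
  says \<open>[s, \<pi> u - u] \<in> L''\<close> for every permutation \<open>\<pi>\<close>, so it suffices that \<open>ad s\<close> is injective
  on \<open>L'/L''\<close>. To see this, map \<open>L\<close> by the abelianized Fox derivative into a polynomial ring
  over \<open>K\<close>. This map kills \<open>L''\<close>, sends \<open>[s, w]\<close> to \<open>-fox w \<cdot> abel s\<close> for \<open>w \<in> L'\<close>, and is
  injective on \<open>L'/L''\<close>: modulo \<open>L''\<close>, \<open>L'\<close> is spanned by the brackets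
  \<open>[[x\<^sub>i, x\<^sub>j], x\<^sub>k\<^sub>1, \<dots>, x\<^sub>k\<^sub>m]\<close>, which depend only on the multiset of the \<open>k\<close>'s, and a left
  inverse of the Fox map is read off from the standard basis of \<open>L'/L''\<close>. As \<open>abel s \<noteq> 0\<close> in a
  domain, \<open>fox w = 0\<close>.\<close>

section \<open>Noncommutative polynomials as a monoid ring\<close>

text \<open>Lists form the free monoid on the letters; with this structure the type
  \<^typ>\<open>'k ncpoly\<close> is its monoid ring, and \<^const>\<open>ncmul\<close> becomes the ring product.\<close>

instantiation list :: (type) monoid_add
begin
definition zero_list_def: "0 = []"
definition plus_list_def: "xs + ys = xs @ ys"
instance by standard (auto simp: zero_list_def plus_list_def)
end

definition lin_ext :: "('a \<Rightarrow> 'b::zero \<Rightarrow> 'c::comm_monoid_add) \<Rightarrow> ('a \<Rightarrow>\<^sub>0 'b) \<Rightarrow> 'c" where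
  "lin_ext g p = (\<Sum>k\<in>Poly_Mapping.keys p. g k (Poly_Mapping.lookup p k))"

lemma additive_lin_ext:
  fixes g :: "'a \<Rightarrow> 'b::ab_group_add \<Rightarrow> 'c::ab_group_add"
  assumes "\<And>k. g k 0 = 0" and "\<And>k a b. g k (a + b) = g k a + g k b"
  shows "additive (lin_ext g)"
  by unfold_locales (simp add: lin_ext_def setsum_keys_plus_distrib assms)

lemma lin_ext_single: "(\<And>k. g k 0 = 0) \<Longrightarrow> lin_ext g (Poly_Mapping.single k a) = g k a"
  by (simp add: lin_ext_def)

lemma poly_mapping_sum_single:
  "p = (\<Sum>k\<in>Poly_Mapping.keys p. Poly_Mapping.single k (Poly_Mapping.lookup p k))"
proof (rule poly_mapping_eqI)
  fix x
  have "(\<Sum>k\<in>Poly_Mapping.keys p. Poly_Mapping.lookup (Poly_Mapping.single k (Poly_Mapping.lookup p k)) x)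
      = Poly_Mapping.lookup p x"
    by (simp add: lookup_single when_def in_keys_iff)
  then show "Poly_Mapping.lookup p x
      = Poly_Mapping.lookup (\<Sum>k\<in>Poly_Mapping.keys p. Poly_Mapping.single k (Poly_Mapping.lookup p k)) x"
    by (simp add: lookup_sum)
qed

lemma poly_mapping_induct [case_names zero single add]:
  fixes p :: "'a \<Rightarrow>\<^sub>0 'b::comm_monoid_add"
  assumes "P 0" and "\<And>k a. P (Poly_Mapping.single k a)" and "\<And>p q. P p \<Longrightarrow> P q \<Longrightarrow> P (p + q)"
  shows "P p"
proof -
  have "P (\<Sum>k\<in>A. Poly_Mapping.single k (Poly_Mapping.lookup p k))" if "finite A" for A
    using that by (induction A rule: finite_induct) (auto intro: assms)
  then show ?thesis
    by (metis finite_keys poly_mapping_sum_single)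
qed

lemma biadditive_poly_mapping_eqI:
  fixes F G :: "('a \<Rightarrow>\<^sub>0 'b::ab_group_add) \<Rightarrow> ('c \<Rightarrow>\<^sub>0 'd::ab_group_add) \<Rightarrow> 'e::ab_group_add"
  assumes "\<And>q. additive (\<lambda>p. F p q)" and "\<And>p. additive (F p)"
    and "\<And>q. additive (\<lambda>p. G p q)" and "\<And>p. additive (G p)"
    and "\<And>k a l b. F (Poly_Mapping.single k a) (Poly_Mapping.single l b)
                  = G (Poly_Mapping.single k a) (Poly_Mapping.single l b)"
  shows "F p q = G p q"
proof -
  have "F (Poly_Mapping.single k a) q = G (Poly_Mapping.single k a) q" for k a
    by (induction q rule: poly_mapping_induct)
      (simp_all add: assms(5) additive.zero[OF assms(2)] additive.zero[OF assms(4)]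
        additive.add[OF assms(2)] additive.add[OF assms(4)])
  then show ?thesis
    by (induction p rule: poly_mapping_induct)
      (simp_all add: additive.zero[OF assms(1)] additive.zero[OF assms(3)]
        additive.add[OF assms(1)] additive.add[OF assms(3)])
qed

lemma ncmul_eq_times: "ncmul p q = p * q"
proof -
  have "ncmul p q = (\<Sum>u\<in>Poly_Mapping.keys p. Poly_Mapping.single u (Poly_Mapping.lookup p u)) *
        (\<Sum>w\<in>Poly_Mapping.keys q. Poly_Mapping.single w (Poly_Mapping.lookup q w))"
    by (simp add: ncmul_def sum_product mult_single plus_list_def)
  then show ?thesis
    by (simp flip: poly_mapping_sum_single)
qed

lemma ncscale_eq_times: "ncscale a p = Poly_Mapping.single [] a * p"
  by (simp add: ncscale_def ncmul_eq_times)

lemma lie_br_eq: "lie_br p q = p * q - q * p"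
  by (simp add: lie_br_def ncmul_eq_times)

lemma single_Nil_mult_commute:
  "Poly_Mapping.single [] (a::'k::comm_ring_1) * p = p * Poly_Mapping.single [] a"
  by (induction p rule: poly_mapping_induct)
    (simp_all add: mult_single plus_list_def distrib_left distrib_right mult.commute)

lemma single_Nil_one: "Poly_Mapping.single [] 1 = 1"
  by (metis single_one zero_list_def)

interpretation ncscale: module "ncscale :: 'k::comm_ring_1 \<Rightarrow> 'k ncpoly \<Rightarrow> 'k ncpoly"
  by unfold_locales
    (simp_all add: ncscale_eq_times distrib_left distrib_right single_add mult_single
      plus_list_def mult.assoc[symmetric] single_Nil_one)

lemma lie_br_add_left: "lie_br (p + q) r = lie_br p r + lie_br q r"
  and lie_br_add_right: "lie_br r (p + q) = lie_br r p + lie_br r q"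
  and lie_br_diff_left: "lie_br (p - q) r = lie_br p r - lie_br q r"
  and lie_br_diff_right: "lie_br r (p - q) = lie_br r p - lie_br r q"
  and lie_br_antisym: "lie_br q p = - lie_br p q"
  and lie_br_zero [simp]: "lie_br 0 p = 0" "lie_br p 0 = 0" "lie_br p p = 0"
  and lie_br_jacobi: "lie_br p (lie_br q r) = lie_br (lie_br p q) r - lie_br (lie_br p r) q"
  by (simp_all add: lie_br_eq algebra_simps)

lemma lie_br_ncscale_left: "lie_br (ncscale a p) q = ncscale a (lie_br p q)"
  and lie_br_ncscale_right: "lie_br q (ncscale a p) = ncscale a (lie_br q p)"
  by (simp_all add: lie_br_eq ncscale_eq_times algebra_simps single_Nil_mult_commute)


lemma subspace_free_lie: "ncscale.subspace (free_lie n)"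
  by (auto simp: ncscale.subspace_def intro: free_lie.intros)

lemma subspace_comm_span: "ncscale.subspace (comm_span A B)"
  by (auto simp: ncscale.subspace_def intro: comm_span.intros)

lemma subspace_L1: "ncscale.subspace (L1 n)"
  and subspace_L2: "ncscale.subspace (L2 n)"
  unfolding L1_def L2_def by (rule subspace_comm_span)+

lemma comm_span_subset:
  assumes "ncscale.subspace S" and "\<And>a b. a \<in> A \<Longrightarrow> b \<in> B \<Longrightarrow> lie_br a b \<in> S"
  shows "comm_span A B \<subseteq> S"
proof
  show "p \<in> S" if "p \<in> comm_span A B" for p
    using that
    by induction (use assms in \<open>auto intro: ncscale.subspace_0 ncscale.subspace_add ncscale.subspace_scale\<close>)
qed

lemma lie_br_in_L1: "a \<in> free_lie n \<Longrightarrow> b \<in> free_lie n \<Longrightarrow> lie_br a b \<in> L1 n"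
  by (simp add: L1_def comm_span.br_in)

lemma lie_br_in_L2: "a \<in> L1 n \<Longrightarrow> b \<in> L1 n \<Longrightarrow> lie_br a b \<in> L2 n"
  by (simp add: L2_def comm_span.br_in)

lemma L1_subset_free_lie: "L1 n \<subseteq> free_lie n"
  unfolding L1_def by (rule comm_span_subset) (auto intro: subspace_free_lie free_lie.br_in)

lemma L2_lie_br_right:
  assumes "l \<in> L2 n" and "x \<in> free_lie n"
  shows "lie_br l x \<in> L2 n"
proof -
  have "ncscale.subspace {l. lie_br l x \<in> L2 n}"
    using subspace_L2 by (auto simp: ncscale.subspace_def lie_br_add_left lie_br_ncscale_left)
  moreover have "lie_br (lie_br a b) x \<in> L2 n" if "a \<in> L1 n" "b \<in> L1 n" for a b
  proof -
    have "lie_br a (lie_br b x) \<in> L2 n" "lie_br b (lie_br a x) \<in> L2 n"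
      using that assms(2) L1_subset_free_lie by (auto intro!: lie_br_in_L2 lie_br_in_L1)
    moreover have "lie_br (lie_br a b) x = lie_br a (lie_br b x) - lie_br b (lie_br a x)"
      by (simp add: lie_br_eq algebra_simps)
    ultimately show ?thesis
      by (simp add: subspace_L2 ncscale.subspace_diff)
  qed
  ultimately show ?thesis
    using comm_span_subset[of _ "L1 n" "L1 n"] assms(1) unfolding L2_def by blast
qed

lemma L2_lie_br_left: "l \<in> L2 n \<Longrightarrow> x \<in> free_lie n \<Longrightarrow> lie_br x l \<in> L2 n"
  by (metis L2_lie_br_right lie_br_antisym subspace_L2 ncscale.subspace_neg)

lemma perm_act_lin_ext: "perm_act \<pi> = lin_ext (\<lambda>w. Poly_Mapping.single (map \<pi> w))"
  by (simp add: fun_eq_iff perm_act_def lin_ext_def)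

interpretation perm_act: additive "perm_act \<pi>" for \<pi>
  unfolding perm_act_lin_ext by (rule additive_lin_ext) (simp_all add: single_add)

declare perm_act.zero [simp]

lemma perm_act_single: "perm_act \<pi> (Poly_Mapping.single w c) = Poly_Mapping.single (map \<pi> w) c"
  by (simp add: perm_act_lin_ext lin_ext_single)

lemma perm_act_times: "perm_act \<pi> (p * q) = perm_act \<pi> p * perm_act \<pi> q"
  by (rule biadditive_poly_mapping_eqI; unfold_locales)
    (simp_all add: perm_act.add perm_act_single distrib_left distrib_right mult_single plus_list_def)

lemma perm_act_ncscale: "perm_act \<pi> (ncscale a p) = ncscale a (perm_act \<pi> p)"
  by (simp add: ncscale_eq_times perm_act_times perm_act_single)

lemma perm_act_lie_br: "perm_act \<pi> (lie_br p q) = lie_br (perm_act \<pi> p) (perm_act \<pi> q)"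
  by (simp add: lie_br_eq perm_act_times perm_act.diff)

lemma perm_act_gen: "perm_act \<pi> (gen i) = gen (\<pi> i)"
  by (simp add: gen_def perm_act_single)

lemma perm_act_free_lie:
  assumes "\<pi> permutes {..<n}" and "p \<in> free_lie n"
  shows "perm_act \<pi> p \<in> free_lie n"
  using assms(2)
proof induction
  case (gen_in i)
  then show ?case
    using permutes_in_image[OF assms(1)] by (simp add: perm_act_gen free_lie.gen_in)
qed (auto simp: perm_act.add perm_act_ncscale perm_act_lie_br intro: free_lie.intros)

lemma perm_act_comm_span:
  assumes "\<And>a. a \<in> A \<Longrightarrow> perm_act \<pi> a \<in> A'" and "\<And>b. b \<in> B \<Longrightarrow> perm_act \<pi> b \<in> B'"
    and "p \<in> comm_span A B"
  shows "perm_act \<pi> p \<in> comm_span A' B'"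
  using assms(3)
  by induction (auto simp: perm_act.add perm_act_ncscale perm_act_lie_br assms intro: comm_span.intros)

lemma perm_act_L1: "\<pi> permutes {..<n} \<Longrightarrow> p \<in> L1 n \<Longrightarrow> perm_act \<pi> p \<in> L1 n"
  unfolding L1_def by (rule perm_act_comm_span) (auto intro: perm_act_free_lie)

definition sum_gens :: "nat \<Rightarrow> 'k::comm_ring_1 ncpoly" where
  "sum_gens n = (\<Sum>i<n. gen i)"

lemma sum_gens_in_free_lie: "sum_gens n \<in> free_lie n"
  unfolding sum_gens_def by (rule ncscale.subspace_sum[OF subspace_free_lie]) (simp add: free_lie.gen_in)

lemma perm_act_sum_gens:
  assumes "\<pi> permutes {..<n}"
  shows "perm_act \<pi> (sum_gens n) = sum_gens n"
  using sum.permute[OF assms, of gen, symmetric]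
  by (simp add: sum_gens_def perm_act.sum perm_act_gen comp_def)

section \<open>Abelianization and the abelianized Fox derivative\<close>

text \<open>Commutative polynomials in the variables \<open>t\<^sub>0, t\<^sub>1, \<dots>\<close>: the letter \<open>x\<^sub>k\<close> becomes
  \<open>t\<^sub>2\<^sub>k\<close>, while \<open>t\<^sub>2\<^sub>j\<^sub>+\<^sub>1\<close> marks a first letter \<open>x\<^sub>j\<close>. So \<open>fox p = \<Sum>\<^sub>j t\<^sub>2\<^sub>j\<^sub>+\<^sub>1 \<cdot> abel (\<partial>\<^sub>j p)\<close>
  with the left Fox derivatives \<open>\<partial>\<^sub>j (x\<^sub>k w) = \<delta>\<^sub>j\<^sub>k w\<close>; the odd variables span a free module over
  the even ones inside an integral domain.\<close>

type_synonym 'k cpoly = "(nat \<Rightarrow>\<^sub>0 nat) \<Rightarrow>\<^sub>0 'k"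

definition ab_mono :: "nat list \<Rightarrow> nat \<Rightarrow>\<^sub>0 nat" where
  "ab_mono w = (\<Sum>k\<leftarrow>w. Poly_Mapping.single (2 * k) 1)"

lemma ab_mono_simps [simp]:
  "ab_mono [] = 0"
  "ab_mono (k # w) = Poly_Mapping.single (2 * k) 1 + ab_mono w"
  "ab_mono (u @ w) = ab_mono u + ab_mono w"
  by (simp_all add: ab_mono_def)

definition fox_mono :: "nat \<Rightarrow> nat list \<Rightarrow> nat \<Rightarrow>\<^sub>0 nat" where
  "fox_mono j w = Poly_Mapping.single (2 * j + 1) 1 + ab_mono w"

definition abel :: "'k::comm_ring_1 ncpoly \<Rightarrow> 'k cpoly" where
  "abel = lin_ext (\<lambda>w. Poly_Mapping.single (ab_mono w))"

definition augm :: "'k::comm_ring_1 ncpoly \<Rightarrow> 'k cpoly" where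
  "augm = lin_ext (\<lambda>w c. if w = [] then Poly_Mapping.single 0 c else 0)"

definition fox :: "'k::comm_ring_1 ncpoly \<Rightarrow> 'k cpoly" where
  "fox = lin_ext (\<lambda>w c. case w of [] \<Rightarrow> 0 | j # v \<Rightarrow> Poly_Mapping.single (fox_mono j v) c)"

interpretation abel: additive abel
  unfolding abel_def by (rule additive_lin_ext) (simp_all add: single_add)

interpretation augm: additive augm
  unfolding augm_def by (rule additive_lin_ext) (simp_all add: single_add)

interpretation fox: additive fox
  unfolding fox_def by (rule additive_lin_ext) (simp_all add: single_add split: list.split)

declare abel.zero [simp] augm.zero [simp] fox.zero [simp]

lemma abel_single: "abel (Poly_Mapping.single w c) = Poly_Mapping.single (ab_mono w) c"
  and augm_single: "augm (Poly_Mapping.single w c) = (if w = [] then Poly_Mapping.single 0 c else 0)"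
  and fox_single: "fox (Poly_Mapping.single w c)
      = (case w of [] \<Rightarrow> 0 | j # v \<Rightarrow> Poly_Mapping.single (fox_mono j v) c)"
  by (simp_all add: abel_def augm_def fox_def lin_ext_single split: list.split)

lemma abel_times: "abel (p * q) = abel p * abel q"
  by (rule biadditive_poly_mapping_eqI; unfold_locales)
    (simp_all add: abel.add abel_single distrib_left distrib_right mult_single plus_list_def)

lemma augm_times: "augm (p * q) = augm p * augm q"
  by (rule biadditive_poly_mapping_eqI; unfold_locales)
    (simp_all add: augm.add augm_single distrib_left distrib_right mult_single plus_list_def)

lemma fox_times: "fox (p * q) = fox p * abel q + augm p * fox q"
  by (rule biadditive_poly_mapping_eqI; unfold_locales)
    (simp_all add: fox.add abel.add augm.add fox_single abel_single augm_single algebra_simps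
      mult_single plus_list_def fox_mono_def split: list.split)

lemma abel_gen: "abel (gen k) = Poly_Mapping.single (Poly_Mapping.single (2 * k) 1) 1"
  by (simp add: gen_def abel_single)

lemma abel_lie_br [simp]: "abel (lie_br p q) = 0"
  and augm_lie_br [simp]: "augm (lie_br p q) = 0"
  by (simp_all add: lie_br_eq abel.diff augm.diff abel_times augm_times mult.commute)

lemma fox_lie_br:
  "fox (lie_br p q) = fox p * abel q + augm p * fox q - fox q * abel p - augm q * fox p"
  by (simp add: lie_br_eq fox.diff fox_times)

lemma abel_ncscale: "abel (ncscale a p) = Poly_Mapping.single 0 a * abel p"
  and augm_ncscale: "augm (ncscale a p) = Poly_Mapping.single 0 a * augm p"
  and fox_ncscale: "fox (ncscale a p) = Poly_Mapping.single 0 a * fox p"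
  by (simp_all add: ncscale_eq_times abel_times augm_times fox_times abel_single augm_single fox_single)

lemma augm_free_lie: "p \<in> free_lie n \<Longrightarrow> augm p = 0"
  by (induction rule: free_lie.induct) (simp_all add: gen_def augm_single augm.add augm_ncscale)

lemma abel_L1: "p \<in> L1 n \<Longrightarrow> abel p = 0"
  unfolding L1_def by (induction rule: comm_span.induct) (simp_all add: abel.add abel_ncscale)

lemma fox_lie_br_L1:
  assumes "c \<in> L1 n" and "x \<in> free_lie n"
  shows "fox (lie_br c x) = fox c * abel x"
proof -
  have "augm c = 0"
    using assms(1) L1_subset_free_lie augm_free_lie by blast
  then show ?thesis
    using assms by (simp add: fox_lie_br abel_L1 augm_free_lie)
qed

lemma fox_L2: "p \<in> L2 n \<Longrightarrow> fox p = 0"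
  unfolding L2_def
proof (induction rule: comm_span.induct)
  case (br_in a b)
  then have "augm a = 0" "augm b = 0"
    using L1_subset_free_lie augm_free_lie by blast+
  with br_in show ?case
    by (simp add: fox_lie_br abel_L1)
qed (simp_all add: fox.add fox_ncscale)

lemma abel_sum_gens_neq_0:
  assumes "n \<ge> 1"
  shows "abel (sum_gens n :: 'k::comm_ring_1 ncpoly) \<noteq> 0"
proof -
  have "Poly_Mapping.single (2 * i) (1::nat) = Poly_Mapping.single 0 1 \<longleftrightarrow> i = 0" for i :: nat
  proof
    assume "Poly_Mapping.single (2 * i) (1::nat) = Poly_Mapping.single 0 1"
    then have "Poly_Mapping.lookup (Poly_Mapping.single (2 * i) (1::nat)) 0 = 1"
      by simp
    then show "i = 0"
      by (simp add: lookup_single when_def split: if_splits)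
  qed simp
  then have "Poly_Mapping.lookup (abel (sum_gens n :: 'k ncpoly)) (Poly_Mapping.single 0 1)
      = (\<Sum>i<n. if i = 0 then 1 else 0)"
    by (simp add: sum_gens_def abel.sum gen_def abel_single lookup_sum lookup_single when_def)
  also have "\<dots> = (1 :: 'k)"
    using assms by simp
  finally show ?thesis
    by auto
qed

definition cong_L2 :: "nat \<Rightarrow> 'k::comm_ring_1 ncpoly \<Rightarrow> 'k ncpoly \<Rightarrow> bool" where
  "cong_L2 n a b \<longleftrightarrow> a - b \<in> L2 n"

lemma cong_L2_refl [simp]: "cong_L2 n a a"
  by (simp add: cong_L2_def ncscale.subspace_0[OF subspace_L2])

lemma cong_L2_sym: "cong_L2 n a b \<Longrightarrow> cong_L2 n b a"
  using ncscale.subspace_neg[OF subspace_L2, of "a - b" n] by (simp add: cong_L2_def)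

lemma cong_L2_trans [trans]: "cong_L2 n a b \<Longrightarrow> cong_L2 n b c \<Longrightarrow> cong_L2 n a c"
  using ncscale.subspace_add[OF subspace_L2, of "a - b" n "b - c"] by (simp add: cong_L2_def)

lemma cong_L2_add:
  assumes "cong_L2 n a b" and "cong_L2 n c d"
  shows "cong_L2 n (a + c) (b + d)"
proof -
  have "(a - b) + (c - d) \<in> L2 n"
    using assms unfolding cong_L2_def by (rule ncscale.subspace_add[OF subspace_L2])
  also have "(a - b) + (c - d) = a + c - (b + d)"
    by (simp add: algebra_simps)
  finally show ?thesis
    unfolding cong_L2_def .
qed

lemma cong_L2_diff:
  assumes "cong_L2 n a b" and "cong_L2 n c d"
  shows "cong_L2 n (a - c) (b - d)"
proof -
  have "(a - b) - (c - d) \<in> L2 n"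
    using assms unfolding cong_L2_def by (rule ncscale.subspace_diff[OF subspace_L2])
  also have "(a - b) - (c - d) = a - c - (b - d)"
    by (simp add: algebra_simps)
  finally show ?thesis
    unfolding cong_L2_def .
qed

lemma cong_L2_minus: "cong_L2 n a b \<Longrightarrow> cong_L2 n (- a) (- b)"
  using cong_L2_diff[OF cong_L2_refl[of n 0]] by simp

lemma cong_L2_ncscale: "cong_L2 n a b \<Longrightarrow> cong_L2 n (ncscale c a) (ncscale c b)"
  using ncscale.subspace_scale[OF subspace_L2, of "a - b" n c]
  by (simp add: cong_L2_def ncscale.scale_right_diff_distrib)

lemma cong_L2_lie_br: "cong_L2 n a b \<Longrightarrow> x \<in> free_lie n \<Longrightarrow> cong_L2 n (lie_br a x) (lie_br b x)"
  using L2_lie_br_right[of "a - b" n x] by (simp add: cong_L2_def lie_br_diff_left)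

fun br_gens :: "'k::comm_ring_1 ncpoly \<Rightarrow> nat list \<Rightarrow> 'k ncpoly" where
  "br_gens c [] = c"
| "br_gens c (k # ks) = br_gens (lie_br c (gen k)) ks"

lemma additive_br_gens: "additive (\<lambda>c. br_gens c ks)"
proof
  show "br_gens (c + d) ks = br_gens c ks + br_gens d ks" for c d :: "'k::comm_ring_1 ncpoly"
    by (induction ks arbitrary: c d) (simp_all add: lie_br_add_left)
qed

lemma br_gens_append: "br_gens c (ks @ ls) = br_gens (br_gens c ks) ls"
  by (induction ks arbitrary: c) simp_all

lemma br_gens_cong:
  "cong_L2 n c d \<Longrightarrow> set ks \<subseteq> {..<n} \<Longrightarrow> cong_L2 n (br_gens c ks) (br_gens d ks)"
  by (induction ks arbitrary: c d) (auto intro: cong_L2_lie_br free_lie.gen_in)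

lemma br_gens_swap:
  assumes "c \<in> L1 n" and "a < n" "b < n" and "set ks \<subseteq> {..<n}"
  shows "cong_L2 n (br_gens c (a # b # ks)) (br_gens c (b # a # ks))"
proof -
  have "lie_br (lie_br c (gen a)) (gen b) - lie_br (lie_br c (gen b)) (gen a)
      = lie_br c (lie_br (gen a) (gen b))"
    by (simp add: lie_br_jacobi)
  also have "\<dots> \<in> L2 n"
    using assms by (intro lie_br_in_L2 lie_br_in_L1 free_lie.gen_in)
  finally have "cong_L2 n (lie_br (lie_br c (gen a)) (gen b)) (lie_br (lie_br c (gen b)) (gen a))"
    unfolding cong_L2_def .
  then show ?thesis
    using br_gens_cong[OF _ assms(4)] by simp
qed

lemma br_gens_insort:
  "c \<in> L1 n \<Longrightarrow> k < n \<Longrightarrow> set ks \<subseteq> {..<n} \<Longrightarrow>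
    cong_L2 n (br_gens c (insort k ks)) (br_gens c (k # ks))"
proof (induction ks arbitrary: c)
  case (Cons a ks)
  show ?case
  proof (cases "k \<le> a")
    case False
    have "lie_br c (gen a) \<in> L1 n"
      using Cons L1_subset_free_lie by (auto intro: lie_br_in_L1 free_lie.gen_in)
    with False Cons have "cong_L2 n (br_gens c (insort k (a # ks))) (br_gens c (a # k # ks))"
      by simp
    also have "cong_L2 n \<dots> (br_gens c (k # a # ks))"
      using Cons by (intro br_gens_swap) auto
    finally show ?thesis .
  qed simp
qed simp

lemma br_gens_sort:
  "c \<in> L1 n \<Longrightarrow> set ks \<subseteq> {..<n} \<Longrightarrow> cong_L2 n (br_gens c (sort ks)) (br_gens c ks)"
proof (induction ks arbitrary: c)
  case (Cons k ks)
  then have "cong_L2 n (br_gens c (sort (k # ks))) (br_gens (lie_br c (gen k)) (sort ks))"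
    using br_gens_insort by fastforce
  also have "cong_L2 n \<dots> (br_gens c (k # ks))"
    using Cons L1_subset_free_lie by (auto intro: lie_br_in_L1 free_lie.gen_in)
  finally show ?case .
qed simp

lemma br_gens_mset_cong:
  assumes "c \<in> L1 n" and "set ks \<subseteq> {..<n}" and "mset ks = mset ks'"
  shows "cong_L2 n (br_gens c ks) (br_gens c ks')"
proof -
  have ks': "set ks' \<subseteq> {..<n}"
    using assms by (metis set_mset_mset)
  have "cong_L2 n (br_gens c ks) (br_gens c (sort ks))"
    using br_gens_sort[OF assms(1,2)] by (rule cong_L2_sym)
  also have "sort ks = sort ks'"
    using assms(3) by (metis sorted_list_of_multiset_mset)
  also have "cong_L2 n (br_gens c (sort ks')) (br_gens c ks')"
    using br_gens_sort[OF assms(1) ks'] .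
  finally show ?thesis .
qed

lemma fox_br_gens:
  "c \<in> L1 n \<Longrightarrow> set ks \<subseteq> {..<n} \<Longrightarrow> fox (br_gens c ks) = fox c * Poly_Mapping.single (ab_mono ks) 1"
proof (induction ks arbitrary: c)
  case (Cons k ks)
  then have "lie_br c (gen k) \<in> L1 n"
    using L1_subset_free_lie by (auto intro: lie_br_in_L1 free_lie.gen_in)
  with Cons show ?case
    by (simp add: fox_lie_br_L1[of _ n] free_lie.gen_in abel_gen mult_single mult.assoc)
qed simp

section \<open>A spanning set of \<open>L'\<close> modulo \<open>L''\<close>\<close>

inductive_set std_span :: "nat \<Rightarrow> 'k::comm_ring_1 ncpoly set" for n where
  br_gens_in: "i < n \<Longrightarrow> j < n \<Longrightarrow> set ks \<subseteq> {..<n} \<Longrightarrow> br_gens (lie_br (gen i) (gen j)) ks \<in> std_span n"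
| L2_in: "l \<in> L2 n \<Longrightarrow> l \<in> std_span n"
| add_in: "p \<in> std_span n \<Longrightarrow> q \<in> std_span n \<Longrightarrow> p + q \<in> std_span n"
| scale_in: "p \<in> std_span n \<Longrightarrow> ncscale a p \<in> std_span n"

lemma subspace_std_span: "ncscale.subspace (std_span n)"
  using std_span.L2_in[OF ncscale.subspace_0[OF subspace_L2]]
  by (auto simp: ncscale.subspace_def intro: std_span.add_in std_span.scale_in)

lemma std_span_lie_br_gen: "c \<in> std_span n \<Longrightarrow> k < n \<Longrightarrow> lie_br c (gen k) \<in> std_span n"
proof (induction rule: std_span.induct)
  case (br_gens_in i j ks)
  then show ?case
    using std_span.br_gens_in[of i n j "ks @ [k]"] by (simp add: br_gens_append)
qed (auto simp: lie_br_add_left lie_br_ncscale_left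
      intro: std_span.intros L2_lie_br_right free_lie.gen_in)

lemma std_span_lie_br: "q \<in> free_lie n \<Longrightarrow> c \<in> std_span n \<Longrightarrow> lie_br c q \<in> std_span n"
proof (induction q arbitrary: c rule: free_lie.induct)
  case (br_in p q)
  then show ?case
    by (simp add: lie_br_jacobi ncscale.subspace_diff[OF subspace_std_span])
qed (auto simp: std_span_lie_br_gen lie_br_add_right lie_br_ncscale_right
      intro: std_span.intros ncscale.subspace_0[OF subspace_std_span])

lemma lie_br_free_lie_in_std_span:
  "a \<in> free_lie n \<Longrightarrow> b \<in> free_lie n \<Longrightarrow> lie_br a b \<in> std_span n"
proof (induction a arbitrary: b rule: free_lie.induct)
  case (gen_in i)
  from gen_in(2) show ?case
  proof (induction b rule: free_lie.induct)
    case (gen_in j)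
    then show ?case
      using std_span.br_gens_in[of i n j "[]"] \<open>i < n\<close> by simp
  next
    case (br_in p q)
    then show ?case
      by (simp add: lie_br_jacobi std_span_lie_br ncscale.subspace_diff[OF subspace_std_span])
  qed (auto simp: lie_br_add_right lie_br_ncscale_right
        intro: std_span.intros ncscale.subspace_0[OF subspace_std_span])
qed (auto simp: lie_br_add_left lie_br_ncscale_left std_span_lie_br
      intro: std_span.intros ncscale.subspace_0[OF subspace_std_span])

lemma L1_subset_std_span: "L1 n \<subseteq> std_span n"
  unfolding L1_def
  by (rule comm_span_subset) (simp_all add: subspace_std_span lie_br_free_lie_in_std_span)

section \<open>Recovering \<open>L'/L''\<close> from the Fox map\<close>

lemma lookup_ab_mono:
  "Poly_Mapping.lookup (ab_mono ks) m = (if even m then count (mset ks) (m div 2) else 0)"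
  by (induction ks) (auto simp: lookup_add lookup_single when_def, presburger+)

lemma lookup_fox_mono_odd:
  "Poly_Mapping.lookup (fox_mono j ks) (2 * m + 1) = (if m = j then 1 else 0)"
  by (simp add: fox_mono_def lookup_add lookup_ab_mono lookup_single when_def)

lemma lookup_fox_mono_even: "Poly_Mapping.lookup (fox_mono j ks) (2 * m) = count (mset ks) m"
  by (simp add: fox_mono_def lookup_add lookup_ab_mono lookup_single when_def; presburger)

lemma fox_mono_eqD:
  assumes "fox_mono j ks = fox_mono j' ks'"
  shows "j = j' \<and> mset ks = mset ks'"
  using assms lookup_fox_mono_odd[of j ks j] lookup_fox_mono_odd[of j' ks' j]
    lookup_fox_mono_even[of j ks] lookup_fox_mono_even[of j' ks']
  by (simp add: multiset_eqI split: if_splits)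

text \<open>The standard basis of \<open>L'/L''\<close> consists of the brackets of \<open>[x\<^sub>j, x\<^sub>p]\<close> with the
  remaining letters, where \<open>p < j\<close> and \<open>p\<close> is the least letter besides \<open>j\<close>. Among them,
  \<^term>\<open>std_elem j ks\<close> is the one whose Fox monomial is \<^term>\<open>fox_mono j ks\<close>, or \<open>0\<close> if there
  is none.\<close>

definition std_elem :: "nat \<Rightarrow> nat list \<Rightarrow> 'k::comm_ring_1 ncpoly" where
  "std_elem j ks = (if \<exists>k\<in>set ks. k < j
     then br_gens (lie_br (gen j) (gen (Min (set ks)))) (remove1 (Min (set ks)) ks) else 0)"

lemma std_elem_mset_cong:
  assumes "mset ks = mset ks'" and "j < n" and "set ks \<subseteq> {..<n}"
  shows "cong_L2 n (std_elem j ks) (std_elem j ks')"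
proof (cases "\<exists>k\<in>set ks. k < j")
  case True
  define p where "p = Min (set ks)"
  have "set ks = set ks'"
    using assms(1) by (metis set_mset_mset)
  moreover have "p \<in> set ks"
    using True by (auto simp: p_def intro: Min_in)
  then have "lie_br (gen j) (gen p) \<in> L1 n"
    using assms(2,3) by (auto intro!: lie_br_in_L1 free_lie.gen_in)
  then have "cong_L2 n (br_gens (lie_br (gen j) (gen p)) (remove1 p ks))
      (br_gens (lie_br (gen j) (gen p)) (remove1 p ks'))"
    using assms(1,3) by (intro br_gens_mset_cong) (auto dest: subsetD[OF set_remove1_subset])
  ultimately show ?thesis
    using True by (simp add: std_elem_def p_def)
next
  case False
  then show ?thesis
    using assms(1) by (simp add: std_elem_def flip: set_mset_mset)
qed

lemma std_elem_diff_cong: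
  assumes "j < i" and "i < n" and "set ks \<subseteq> {..<n}"
  shows "cong_L2 n (std_elem i (j # ks) - std_elem j (i # ks))
    (br_gens (lie_br (gen i) (gen j)) ks)"
proof (cases "\<exists>k\<in>set ks. k < j")
  case False
  then have "Min (insert j (set ks)) = j"
    by (intro Min_eqI) auto
  with False assms(1) show ?thesis
    by (auto simp: std_elem_def)
next
  case True
  define p where "p = Min (set ks)"
  define ks' where "ks' = remove1 p ks"
  have p: "p \<in> set ks" "p < j" "\<And>k. k \<in> set ks \<Longrightarrow> p \<le> k"
    using True by (auto simp: p_def intro: Min_in) (meson Min_le List.finite_set le_less_trans not_le)
  then have "Min (insert j (set ks)) = p" "Min (insert i (set ks)) = p"
    using assms(1) by (auto intro: Min_eqI)
  with p assms(1) have "std_elem i (j # ks) - std_elem j (i # ks)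
      = br_gens (lie_br (lie_br (gen i) (gen p)) (gen j) - lie_br (lie_br (gen j) (gen p)) (gen i)) ks'"
    by (auto simp: std_elem_def ks'_def additive.diff[OF additive_br_gens])
  also have "\<dots> = br_gens (lie_br (gen i) (gen j)) (p # ks')"
    by (simp add: lie_br_eq algebra_simps)
  also have "cong_L2 n \<dots> (br_gens (lie_br (gen i) (gen j)) ks)"
    using p assms
    by (intro br_gens_mset_cong lie_br_in_L1 free_lie.gen_in)
      (auto simp: ks'_def dest: subsetD[OF set_remove1_subset])
  finally show ?thesis .
qed

text \<open>The inverse of \<^const>\<open>fox_mono\<close> recovers \<open>ks\<close> only up to order, so the following
  map inverts \<^const>\<open>fox\<close> only modulo \<open>L''\<close>.\<close>

definition fox_inv :: "'k::comm_ring_1 cpoly \<Rightarrow> 'k ncpoly" where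
  "fox_inv = lin_ext (\<lambda>b c. ncscale c (case_prod std_elem (inv (case_prod fox_mono) b)))"

interpretation fox_inv: additive fox_inv
  unfolding fox_inv_def by (rule additive_lin_ext) (simp_all add: ncscale.scale_left_distrib)

declare fox_inv.zero [simp]

lemma fox_inv_single:
  "fox_inv (Poly_Mapping.single b c) = ncscale c (case_prod std_elem (inv (case_prod fox_mono) b))"
  by (simp add: fox_inv_def lin_ext_single)

lemma fox_inv_mult_const: "fox_inv (Poly_Mapping.single 0 a * m) = ncscale a (fox_inv m)"
  by (induction m rule: poly_mapping_induct)
    (simp_all add: mult_single fox_inv_single fox_inv.add distrib_left ncscale.scale_right_distrib)

lemma fox_inv_fox_mono:
  assumes "j < n" and "set ks \<subseteq> {..<n}"
  shows "cong_L2 n (fox_inv (Poly_Mapping.single (fox_mono j ks) 1)) (std_elem j ks)"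
proof -
  obtain j' ks' where inv: "inv (case_prod fox_mono) (fox_mono j ks) = (j', ks')"
    by fastforce
  have "fox_mono j' ks' = fox_mono j ks"
    using f_inv_into_f[of "fox_mono j ks" "case_prod fox_mono" UNIV] inv by force
  then have "j' = j" "mset ks' = mset ks"
    using fox_mono_eqD by blast+
  then show ?thesis
    using cong_L2_sym[OF std_elem_mset_cong[of ks ks' j n]] assms
    by (simp add: fox_inv_single inv)
qed

lemma fox_br_gens_lie_br_gen:
  assumes "i < n" "j < n" and "set ks \<subseteq> {..<n}"
  shows "fox (br_gens (lie_br (gen i) (gen j)) ks)
      = Poly_Mapping.single (fox_mono i (j # ks)) 1 - Poly_Mapping.single (fox_mono j (i # ks)) 1"
proof -
  have "fox (lie_br (gen i) (gen j))
      = Poly_Mapping.single (fox_mono i [j]) 1 - Poly_Mapping.single (fox_mono j [i]) (1::'a)"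
    by (simp add: lie_br_eq gen_def mult_single plus_list_def fox.diff fox_single)
  then show ?thesis
    using assms
    by (simp add: fox_br_gens[of _ n] lie_br_in_L1 free_lie.gen_in left_diff_distrib mult_single
        fox_mono_def add.assoc)
qed

lemma fox_inv_fox_br_gens:
  assumes "i < n" "j < n" and "set ks \<subseteq> {..<n}"
  shows "cong_L2 n (fox_inv (fox (br_gens (lie_br (gen i) (gen j)) ks)))
    (br_gens (lie_br (gen i) (gen j)) ks)"
proof -
  have less: "cong_L2 n (fox_inv (fox (br_gens (lie_br (gen a) (gen b)) ks)))
      (br_gens (lie_br (gen a) (gen b)) ks)"
    if "b < a" "a < n" for a b
  proof -
    have "cong_L2 n (fox_inv (fox (br_gens (lie_br (gen a) (gen b)) ks)))
        (std_elem a (b # ks) - std_elem b (a # ks))"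
      using that assms(3)
      by (simp add: fox_br_gens_lie_br_gen fox_inv.diff cong_L2_diff fox_inv_fox_mono)
    also have "cong_L2 n \<dots> (br_gens (lie_br (gen a) (gen b)) ks)"
      using that assms(3) by (rule std_elem_diff_cong)
    finally show ?thesis .
  qed
  consider "j < i" | "i = j" | "i < j"
    by linarith
  then show ?thesis
  proof cases
    case 3
    have "cong_L2 n (- fox_inv (fox (br_gens (lie_br (gen j) (gen i)) ks)))
        (- br_gens (lie_br (gen j) (gen i)) ks)"
      using cong_L2_minus[OF less[OF 3 assms(2)]] .
    then show ?thesis
      by (metis lie_br_antisym additive.minus[OF additive_br_gens] fox.minus fox_inv.minus)
  qed (use less assms in \<open>simp_all add: additive.zero[OF additive_br_gens]\<close>)
qed

lemma fox_inv_fox: "c \<in> std_span n \<Longrightarrow> cong_L2 n (fox_inv (fox c)) c"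
proof (induction rule: std_span.induct)
  case (L2_in l)
  then show ?case
    by (simp add: fox_L2 cong_L2_def ncscale.subspace_neg[OF subspace_L2])
qed (simp_all add: fox_inv_fox_br_gens fox.add fox_inv.add cong_L2_add fox_ncscale
      fox_inv_mult_const cong_L2_ncscale)

lemma L2_if_fox_eq_0:
  assumes "c \<in> L1 n" and "fox c = 0"
  shows "c \<in> L2 n"
proof -
  have "cong_L2 n 0 c"
    using fox_inv_fox[of c n] assms L1_subset_std_span by auto
  then have "- (0 - c) \<in> L2 n"
    unfolding cong_L2_def by (rule ncscale.subspace_neg[OF subspace_L2])
  then show ?thesis
    by simp
qed

lemma sym_F_psi:
  assumes "u \<in> free_lie n" "sym_F n u" and "v \<in> free_lie n" "sym_F n v"
  shows "sym_F n (psi u v)"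
  unfolding sym_F_def
proof (intro allI impI)
  fix \<pi> assume \<pi>: "\<pi> permutes {..<n}"
  have "perm_act \<pi> (psi u v) - psi u v
      = (perm_act \<pi> v - v) + lie_br (perm_act \<pi> v - v) (perm_act \<pi> u) + lie_br v (perm_act \<pi> u - u)"
    by (simp add: psi_def perm_act.add perm_act_lie_br lie_br_diff_left lie_br_diff_right)
  also have "\<dots> \<in> L2 n"
    using assms \<pi> perm_act_free_lie unfolding sym_F_def
    by (intro ncscale.subspace_add[OF subspace_L2] L2_lie_br_left L2_lie_br_right) auto
  finally show "perm_act \<pi> (psi u v) - psi u v \<in> L2 n" .
qed

lemma L2_if_lie_br_sum_gens_in_L2:
  fixes w :: "'k::idom ncpoly"
  assumes "n \<ge> 1" and "w \<in> L1 n" and "lie_br (sum_gens n) w \<in> L2 n"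
  shows "w \<in> L2 n"
proof -
  have "augm w = 0" "augm (sum_gens n :: 'k ncpoly) = 0"
    using assms(2) L1_subset_free_lie sum_gens_in_free_lie augm_free_lie by blast+
  then have "fox (lie_br (sum_gens n) w) = - (fox w * abel (sum_gens n))"
    using assms(2) by (simp add: fox_lie_br abel_L1)
  then have "fox w * abel (sum_gens n) = 0"
    using fox_L2[OF assms(3)] by simp
  then have "fox w = 0"
    using abel_sum_gens_neq_0[OF assms(1), where 'k = 'k] by simp
  then show ?thesis
    using assms(2) by (rule L2_if_fox_eq_0[rotated])
qed

lemma sym_F_if_sym_F_psi_sum_gens:
  fixes u :: "'k::idom ncpoly"
  assumes "n \<ge> 1" and "u \<in> L1 n" and "sym_F n (psi u (sum_gens n))"
  shows "sym_F n u"
  unfolding sym_F_def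
proof (intro allI impI)
  fix \<pi> assume \<pi>: "\<pi> permutes {..<n}"
  have "perm_act \<pi> (psi u (sum_gens n)) - psi u (sum_gens n) \<in> L2 n"
    using assms(3) \<pi> unfolding sym_F_def by blast
  also have "perm_act \<pi> (psi u (sum_gens n)) - psi u (sum_gens n)
      = lie_br (sum_gens n) (perm_act \<pi> u - u)"
    by (simp add: psi_def perm_act.add perm_act_lie_br perm_act_sum_gens[OF \<pi>] lie_br_diff_right)
  finally have "lie_br (sum_gens n) (perm_act \<pi> u - u) \<in> L2 n" .
  moreover have "perm_act \<pi> u - u \<in> L1 n"
    using assms(2) \<pi> by (simp add: perm_act_L1 ncscale.subspace_diff[OF subspace_L1])
  ultimately show "perm_act \<pi> u - u \<in> L2 n"
    by (rule L2_if_lie_br_sum_gens_in_L2[OF assms(1), rotated])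
qed

theorem theorem2p1:
  fixes n :: nat and u :: "'k::field_char_0 ncpoly"
  assumes "n \<ge> 2"
    and "u \<in> L1 n"
  shows "(\<forall>v\<in>free_lie n. sym_F n v \<longrightarrow> sym_F n (psi u v)) \<longleftrightarrow> sym_F n u"
proof
  assume psi_sym: "\<forall>v\<in>free_lie n. sym_F n v \<longrightarrow> sym_F n (psi u v)"
  have "sym_F n (sum_gens n :: 'k ncpoly)"
    by (simp add: sym_F_def perm_act_sum_gens ncscale.subspace_0[OF subspace_L2])
  then have "sym_F n (psi u (sum_gens n))"
    by (rule psi_sym[rule_format, OF sum_gens_in_free_lie])
  moreover have "n \<ge> 1"
    using assms(1) by simp
  ultimately show "sym_F n u"
    using assms(2) by (rule sym_F_if_sym_F_psi_sum_gens[rotated 2])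
next
  assume "sym_F n u"
  moreover have "u \<in> free_lie n"
    using assms(2) L1_subset_free_lie by blast
  ultimately show "\<forall>v\<in>free_lie n. sym_F n v \<longrightarrow> sym_F n (psi u v)"
    by (simp add: sym_F_psi)
qed

end
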